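(* Let $p$ be an odd prime with $p\equiv 1\pmod 4$, and let $B$ be a perfect $B[-1,3](p)$ set. If $i\in B$, then $i\cdot\langle -\tfrac32\rangle\subseteq B$, where $\langle -\tfrac32\rangle$ denotes the subgroup of $\mathbb{Z}_p^\ast$ generated by $-3\cdot 2^{-1}\bmod p$.
   Context: $\mathbb{Z}_p^\ast$ is the multiplicative group of nonzero residues modulo $p$. A set $B\subseteq\mathbb{Z}_p$ is a perfect $B[-1,3](p)$ set if every nonzero element of $\mathbb{Z}_p$ has a unique representation $ab \bmod p$ with $a\in\{-1,1,2,3\}$ and $b\in B$ (and $0$ has no such representation); equivalently $B\subseteq\mathbb{Z}_p^\ast$, $|B|=(p-1)/4$, and the sets $\{-b,b,2b,3b\}$, $b\in B$, partition $\mathbb{Z}_p^\ast$. *)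

theory Defs
  imports "HOL-Number_Theory.Number_Theory"
begin

text \<open>Residues modulo p are represented by integers in {0..<p}.\<close>

definition perfect_B_m1_3 :: "int \<Rightarrow> int set \<Rightarrow> bool" where
  "perfect_B_m1_3 p B \<longleftrightarrow>
     B \<subseteq> {0..<p} \<and>
     (\<forall>x\<in>{1..<p}. \<exists>!(a, b). a \<in> {-1, 1, 2, 3} \<and> b \<in> B \<and> (a * b) mod p = x) \<and>
     (\<forall>a\<in>{-1, 1, 2, 3}. \<forall>b\<in>B. (a * b) mod p \<noteq> 0)"

definition minus_three_halves :: "int \<Rightarrow> int" where
  "minus_three_halves p = (THE g. g \<in> {0..<p} \<and> [2 * g = -3] (mod p))"

text \<open>Subgroup of Z_p^* generated by g (in a finite group: the set of powers of g).\<close>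
definition gen_subgroup :: "int \<Rightarrow> int \<Rightarrow> int set" where
  "gen_subgroup p g = {(g ^ k) mod p | k. k \<in> (UNIV :: nat set)}"

end

theory Submission
  imports Defs
begin

text \<open>Write \<open>g = -3/2\<close>. For \<open>i \<in> B\<close>, the nonzero residue \<open>-3i\<close> has a representation
  \<open>a b\<close> with \<open>a \<in> {-1,1,2,3}\<close>, \<open>b \<in> B\<close>. The coefficients \<open>-1\<close>, \<open>1\<close> and \<open>3\<close> are impossible:
  they would give \<open>b = 3i\<close>, \<open>-b = 3i\<close> or \<open>-b = i\<close>, i.e. a second representation of
  \<open>3i\<close> or of \<open>i\<close>. Hence \<open>2b = -3i\<close>, so \<open>b = g i \<in> B\<close>; iterating gives \<open>i g\<^sup>k \<in> B\<close>.\<close>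

lemma perfect_B_m1_3_subset:
  "perfect_B_m1_3 p B \<Longrightarrow> B \<subseteq> {0..<p}"
  unfolding perfect_B_m1_3_def by (elim conjE)

lemma perfect_B_m1_3_rep:
  "perfect_B_m1_3 p B \<Longrightarrow> x \<in> {1..<p} \<Longrightarrow>
    \<exists>!(a, b). a \<in> {-1, 1, 2, 3} \<and> b \<in> B \<and> (a * b) mod p = x"
  unfolding perfect_B_m1_3_def by (elim conjE) (drule bspec)

lemma perfect_B_m1_3_nonzero:
  "perfect_B_m1_3 p B \<Longrightarrow> a \<in> {-1, 1, 2, 3} \<Longrightarrow> b \<in> B \<Longrightarrow> (a * b) mod p \<noteq> 0"
  unfolding perfect_B_m1_3_def by (elim conjE) (drule bspec, assumption, drule bspec, assumption)

lemma perfect_B_m1_3_not_dvd: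
  assumes "perfect_B_m1_3 p B" "a \<in> {-1, 1, 2, 3}" "b \<in> B"
  shows "\<not> p dvd a"
  using perfect_B_m1_3_nonzero[OF assms] by auto

lemma perfect_B_m1_3_rep_exists:
  assumes "perfect_B_m1_3 p B" "b \<in> B" "\<not> p dvd x"
  shows "\<exists>a\<in>{-1, 1, 2, 3}. \<exists>b'\<in>B. [a * b' = x] (mod p)"
proof -
  have "p > 0"
    using perfect_B_m1_3_subset[OF assms(1)] assms(2) by auto
  then have "0 \<le> x mod p" "x mod p < p"
    by simp_all
  then have "x mod p \<in> {1..<p}"
    using assms(3) by (auto simp: dvd_eq_mod_eq_0)
  then obtain a b' where "a \<in> {-1, 1, 2, 3}" "b' \<in> B" "(a * b') mod p = x mod p"
    using perfect_B_m1_3_rep[OF assms(1)] by blast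
  then show ?thesis
    unfolding cong_def by blast
qed

lemma perfect_B_m1_3_rep_unique:
  assumes perf: "perfect_B_m1_3 p B"
    and "a \<in> {-1, 1, 2, 3}" "b \<in> B" "a' \<in> {-1, 1, 2, 3}" "b' \<in> B"
    and cong: "[a * b = a' * b'] (mod p)"
  shows "a = a' \<and> b = b'"
proof -
  define x where "x = (a * b) mod p"
  have "p > 0"
    using perfect_B_m1_3_subset[OF perf] \<open>b \<in> B\<close> by auto
  then have "0 \<le> x" "x < p"
    unfolding x_def by simp_all
  then have "x \<in> {1..<p}"
    using perfect_B_m1_3_nonzero[OF perf \<open>a \<in> _\<close> \<open>b \<in> B\<close>]
    unfolding x_def by auto
  then have "\<exists>!(a, b). a \<in> {-1, 1, 2, 3} \<and> b \<in> B \<and> (a * b) mod p = x"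
    by (rule perfect_B_m1_3_rep[OF perf])
  moreover have "(a' * b') mod p = x"
    using cong unfolding x_def cong_def by simp
  ultimately have "(a, b) = (a', b')"
    using assms(2-5) unfolding x_def by blast
  then show ?thesis
    by simp
qed

lemma perfect_B_m1_3_rep_minus_three:
  assumes perf: "perfect_B_m1_3 p B" and "coprime 3 p" and "i \<in> B"
    and "a \<in> {-1, 1, 2, 3}" "b \<in> B" and rep: "[a * b = -3 * i] (mod p)"
  shows "a = 2"
proof (rule ccontr)
  assume "a \<noteq> 2"
  then consider "a = -1" | "a = 1" | "a = 3"
    using \<open>a \<in> _\<close> by auto
  then show False
  proof cases
    case 1
    then have "[1 * b = 3 * i] (mod p)"
      using rep by (metis cong_minus_minus_iff mult_1 mult_minus_left)
    then show False
      using perfect_B_m1_3_rep_unique[OF perf _ \<open>b \<in> B\<close> _ \<open>i \<in> B\<close>, of 1 3] by auto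
  next
    case 2
    then have "[-1 * b = 3 * i] (mod p)"
      using rep by (metis cong_minus_minus_iff mult_1 mult_minus_left minus_minus)
    then show False
      using perfect_B_m1_3_rep_unique[OF perf _ \<open>b \<in> B\<close> _ \<open>i \<in> B\<close>, of "-1" 3] by auto
  next
    case 3
    then have "[3 * b = 3 * -i] (mod p)"
      using rep by simp
    then have "[b = -i] (mod p)"
      using \<open>coprime 3 p\<close> cong_mult_lcancel by blast
    then have "[-1 * b = 1 * i] (mod p)"
      by (metis cong_minus_minus_iff mult_1 mult_minus_left minus_minus)
    then show False
      using perfect_B_m1_3_rep_unique[OF perf _ \<open>b \<in> B\<close> _ \<open>i \<in> B\<close>, of "-1" 1] by auto
  qed
qed

lemma perfect_B_m1_3_mult_minus_three_halves:
  assumes "prime p" "odd p" and perf: "perfect_B_m1_3 p B" and "i \<in> B"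
    and g: "[2 * g = -3] (mod p)"
  shows "(g * i) mod p \<in> B"
proof -
  have "coprime 3 p"
    using perfect_B_m1_3_not_dvd[OF perf _ \<open>i \<in> B\<close>, of 3] \<open>prime p\<close>
    by (simp add: prime_imp_coprime_int coprime_commute)
  have "\<not> p dvd 3 * i"
    using perfect_B_m1_3_nonzero[OF perf _ \<open>i \<in> B\<close>, of 3]
    by (simp add: dvd_eq_mod_eq_0)
  then have "\<not> p dvd -3 * i"
    by simp
  then obtain a b where "a \<in> {-1, 1, 2, 3}" "b \<in> B" and rep: "[a * b = -3 * i] (mod p)"
    using perfect_B_m1_3_rep_exists[OF perf \<open>i \<in> B\<close>] by blast
  then have "a = 2"
    using perfect_B_m1_3_rep_minus_three[OF perf \<open>coprime 3 p\<close> \<open>i \<in> B\<close>] by blast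
  moreover have "[2 * (g * i) = -3 * i] (mod p)"
    using cong_scalar_right[OF g, of i] by (simp add: mult.assoc)
  ultimately have "[2 * b = 2 * (g * i)] (mod p)"
    using rep by (simp add: cong_def)
  then have "[b = g * i] (mod p)"
    using \<open>odd p\<close> cong_mult_lcancel[of 2 p] by simp
  moreover have "b \<in> {0..<p}"
    using perfect_B_m1_3_subset[OF perf] \<open>b \<in> B\<close> by auto
  ultimately show ?thesis
    using \<open>b \<in> B\<close> by (simp add: cong_def)
qed

lemma minus_three_halves_cong:
  assumes "odd p" "p > 0"
  shows "[2 * minus_three_halves p = -3] (mod p)"
proof -
  define g where "g = ((p - 3) div 2) mod p"
  have "[2 * g = 2 * ((p - 3) div 2)] (mod p)"
    unfolding g_def cong_def by (simp add: mod_mult_right_eq)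
  also have "2 * ((p - 3) div 2) = p - 3"
    using \<open>odd p\<close> by simp
  also have "[p - 3 = -3] (mod p)"
    by (simp add: cong_def)
  finally have g_cong: "[2 * g = -3] (mod p)" .
  have "\<exists>!g. g \<in> {0..<p} \<and> [2 * g = -3] (mod p)"
  proof (rule ex1I[of _ g])
    show "g \<in> {0..<p} \<and> [2 * g = -3] (mod p)"
      using g_cong \<open>p > 0\<close> unfolding g_def by simp
  next
    fix h assume h: "h \<in> {0..<p} \<and> [2 * h = -3] (mod p)"
    then have "[2 * h = 2 * g] (mod p)"
      using g_cong by (simp add: cong_def)
    then have "[h = g] (mod p)"
      using \<open>odd p\<close> cong_mult_lcancel[of 2 p] by simp
    then show "h = g"
      using h \<open>p > 0\<close> unfolding g_def cong_def by simp
  qed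
  then have "minus_three_halves p \<in> {0..<p} \<and> [2 * minus_three_halves p = -3] (mod p)"
    unfolding minus_three_halves_def by (rule theI')
  then show ?thesis ..
qed

lemma mod_mult_power_closed:
  fixes p g :: int and B :: "int set"
  assumes "B \<subseteq> {0..<p}" "i \<in> B" and closed: "\<And>x. x \<in> B \<Longrightarrow> (g * x) mod p \<in> B"
  shows "(i * g ^ k) mod p \<in> B"
proof (induction k)
  case 0
  then show ?case
    using assms(1,2) by auto
next
  case (Suc k)
  have "(g * ((i * g ^ k) mod p)) mod p = (i * g ^ Suc k) mod p"
    by (metis mod_mult_right_eq mult.left_commute power_Suc)
  then show ?case
    using closed[OF Suc] by simp
qed

theorem theorem4p3:
  fixes p :: int and B :: "int set" and i :: int
  assumes "prime p" and "odd p" and "[p = 1] (mod 4)"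
    and "perfect_B_m1_3 p B"
    and "i \<in> B"
  shows "{(i * h) mod p | h. h \<in> gen_subgroup p (minus_three_halves p)} \<subseteq> B"
proof -
  have "[2 * minus_three_halves p = -3] (mod p)"
    using assms(1,2) by (simp add: minus_three_halves_cong prime_gt_0_int)
  then have "(minus_three_halves p * x) mod p \<in> B" if "x \<in> B" for x
    using perfect_B_m1_3_mult_minus_three_halves assms(1,2,4) that by blast
  then have "(i * minus_three_halves p ^ k) mod p \<in> B" for k
    using mod_mult_power_closed perfect_B_m1_3_subset[OF assms(4)] assms(5) by blast
  then show ?thesis
    unfolding gen_subgroup_def by (auto simp: mod_mult_right_eq)
qed

end
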